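(* Let $\mathcal{H}$ be an $n$-dimensional complex Hilbert space and let $\rho_1,\dots,\rho_m$ be density operators on $\mathcal{H}$ whose eigenvectors collectively span $\mathcal{H}$, with prior probabilities $p_1,\dots,p_m>0$, $\sum_i p_i=1$. Write $\rho_i=\phi_i\phi_i^*$ for some matrices (factors) $\phi_i$, set $\psi_i=\sqrt{p_i}\,\phi_i$, let $\Psi$ be the matrix with block columns $\psi_1,\dots,\psi_m$, and let $T=(\Psi\Psi^* )^{-1/2}$. Let $\mu_i=T\psi_i$ and $\Sigma_i=\mu_i\mu_i^*$ (the least-squares measurement, LSM). If there is a constant $\alpha$, independent of $i$, such that $\mu_i^*\psi_i=\psi_i^*T\psi_i=\alpha I$ for every $i=1,\dots,m$, then the LSM $\{\Sigma_i\}$ minimizes the probability of a detection error, i.e. it maximizes $P_d=\sum_{i=1}^m p_i\operatorname{tr}(\rho_i\Pi_i)$ over all measurements $\{\Pi_i\}_{i=1}^m$ with $\Pi_i\ge 0$ and $\sum_{i=1}^m\Pi_i=I$.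
   Context: A density operator is a positive semidefinite Hermitian operator of trace one. A measurement is a collection of positive semidefinite Hermitian operators $\Pi_1,\dots,\Pi_m$ on $\mathcal{H}$ summing to the identity; the probability of correct detection is $P_d=\sum_i p_i\operatorname{tr}(\rho_i\Pi_i)$ and the probability of a detection error is $1-P_d$. $(\cdot)^{-1/2}$ denotes the inverse of the unique positive Hermitian square root; $\Psi\Psi^*=\sum_i\psi_i\psi_i^*$ is invertible because the eigenvectors of the $\rho_i$ span $\mathcal{H}$. $I$ in $\alpha I$ denotes the identity matrix of size equal to the number of columns of $\phi_i$. *)

theory Defs
  imports "Jordan_Normal_Form.Jordan_Normal_Form" "Jordan_Normal_Form.Schur_Decomposition" "Jordan_Normal_Form.VS_Connect"
begin

definition hermitian :: "complex mat \<Rightarrow> bool" where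
  "hermitian A \<longleftrightarrow> mat_adjoint A = A"

definition psd :: "nat \<Rightarrow> complex mat \<Rightarrow> bool" where
  "psd n A \<longleftrightarrow> A \<in> carrier_mat n n \<and> hermitian A \<and>
     (\<forall>v \<in> carrier_vec n. 0 \<le> Re ((A *\<^sub>v v) \<bullet>c v))"

definition mat_trace :: "complex mat \<Rightarrow> complex" where
  "mat_trace A = (\<Sum>i<dim_row A. A $$ (i, i))"

definition density_op :: "nat \<Rightarrow> complex mat \<Rightarrow> bool" where
  "density_op n \<rho> \<longleftrightarrow> psd n \<rho> \<and> mat_trace \<rho> = 1"

fun msum :: "nat \<Rightarrow> (nat \<Rightarrow> complex mat) \<Rightarrow> nat \<Rightarrow> complex mat" where
  "msum n f 0 = 0\<^sub>m n n"
| "msum n f (Suc k) = msum n f k + f k"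

definition is_measurement :: "nat \<Rightarrow> nat \<Rightarrow> (nat \<Rightarrow> complex mat) \<Rightarrow> bool" where
  "is_measurement n m Pm \<longleftrightarrow> (\<forall>i<m. psd n (Pm i)) \<and> msum n Pm m = 1\<^sub>m n"

definition prob_detect :: "nat \<Rightarrow> (nat \<Rightarrow> real) \<Rightarrow> (nat \<Rightarrow> complex mat) \<Rightarrow> (nat \<Rightarrow> complex mat) \<Rightarrow> real" where
  "prob_detect m p \<rho> Pm = (\<Sum>i<m. p i * Re (mat_trace (\<rho> i * Pm i)))"

definition spans :: "nat \<Rightarrow> complex vec set \<Rightarrow> bool" where
  "spans n E \<longleftrightarrow> E \<subseteq> carrier_vec n \<and>
     module.span class_ring (module_vec TYPE(complex) n) E = carrier_vec n"

text \<open>Eigenvectors of the rho i belonging to nonzero eigenvalues (i.e. spanning their supports).\<close>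
definition support_eigvecs :: "nat \<Rightarrow> (nat \<Rightarrow> complex mat) \<Rightarrow> complex vec set" where
  "support_eigvecs m \<rho> = {v. \<exists>i<m. \<exists>k. k \<noteq> 0 \<and> eigenvector (\<rho> i) v k}"

end

theory Submission
  imports Defs
begin

text \<open>Write \<open>G\<^sub>i = \<psi>\<^sub>i \<psi>\<^sub>i\<^sup>* = p\<^sub>i \<rho>\<^sub>i\<close>, so that \<open>S\<^sup>2 = \<Sum> G\<^sub>i\<close> and \<open>T = S\<^sup>-\<^sup>1\<close>. The hypothesis
  \<open>\<psi>\<^sub>i\<^sup>* T \<psi>\<^sub>i = \<alpha> I\<close> forces \<open>\<alpha> = a \<ge> 0\<close> and, by Cauchy-Schwarz for the form of \<open>T\<close>,
  \<open>a S - G\<^sub>i \<ge> 0\<close>. Since \<open>tr (X P) \<ge> 0\<close> for positive semidefinite \<open>X\<close> and \<open>P\<close>, every measurement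
  satisfies \<open>P\<^sub>d = \<Sum> tr (G\<^sub>i \<Pi>\<^sub>i) \<le> a \<Sum> tr (S \<Pi>\<^sub>i) = a tr S\<close>. The least-squares measurement
  \<open>\<Sigma>\<^sub>i = T G\<^sub>i T\<close> sums to \<open>T S\<^sup>2 T = I\<close> and attains this bound, because
  \<open>tr (G\<^sub>i T G\<^sub>i T) = a\<^sup>2 r\<^sub>i\<close> while \<open>tr S = tr (T S\<^sup>2) = a \<Sum> r\<^sub>i\<close>.\<close>

section \<open>Adjoints, traces and finite sums of matrices\<close>

lemma dim_row_mat_adjoint [simp]: "dim_row (mat_adjoint A) = dim_col A"
  by (simp add: mat_adjoint_def)

lemma dim_col_mat_adjoint [simp]: "dim_col (mat_adjoint A) = dim_row A"
  by (simp add: mat_adjoint_def)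

lemma index_mat_adjoint [simp]:
  "i < dim_col A \<Longrightarrow> j < dim_row A \<Longrightarrow> mat_adjoint A $$ (i, j) = cnj (A $$ (j, i))"
  by (auto simp: mat_adjoint_def mat_of_rows_def)

lemma mat_adjoint_carrier [simp]: "A \<in> carrier_mat a b \<Longrightarrow> mat_adjoint A \<in> carrier_mat b a"
  unfolding carrier_mat_def by simp

lemma mat_adjoint_adjoint [simp]: "mat_adjoint (mat_adjoint (A :: complex mat)) = A"
  by (rule eq_matI) auto

lemma mat_adjoint_one [simp]: "mat_adjoint (1\<^sub>m n :: complex mat) = 1\<^sub>m n"
  by (rule eq_matI) auto

lemma mat_adjoint_mult:
  "A \<in> carrier_mat a b \<Longrightarrow> B \<in> carrier_mat b c \<Longrightarrow>
   mat_adjoint (A * B) = mat_adjoint B * mat_adjoint (A :: complex mat)"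
  by (rule eq_matI) (auto simp: scalar_prod_def sum_conjugate[simplified] mult.commute)

lemma mat_adjoint_smult: "mat_adjoint (c \<cdot>\<^sub>m (A :: complex mat)) = cnj c \<cdot>\<^sub>m mat_adjoint A"
  by (rule eq_matI) auto

lemma mat_adjoint_minus:
  "A \<in> carrier_mat a b \<Longrightarrow> B \<in> carrier_mat a b \<Longrightarrow>
   mat_adjoint (A - B) = mat_adjoint A - mat_adjoint (B :: complex mat)"
  by (rule eq_matI) auto

lemma cscalar_prod_swap:
  "v \<in> carrier_vec n \<Longrightarrow> w \<in> carrier_vec n \<Longrightarrow> v \<bullet>c w = cnj (w \<bullet>c (v :: complex vec))"
  by (auto simp: scalar_prod_def sum_conjugate[simplified] mult.commute)

lemma cscalar_prod_mat_adjoint: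
  assumes A: "A \<in> carrier_mat a b" and v: "v \<in> carrier_vec b" and w: "w \<in> carrier_vec a"
  shows "(A *\<^sub>v v) \<bullet>c w = v \<bullet>c (mat_adjoint A *\<^sub>v (w :: complex vec))"
proof -
  have "(A *\<^sub>v v) \<bullet>c w = (\<Sum>i<a. \<Sum>k<b. A $$ (i, k) * v $ k * cnj (w $ i))"
    using A v w by (auto simp: scalar_prod_def atLeast0LessThan sum_distrib_right intro!: sum.cong)
  also have "\<dots> = (\<Sum>k<b. \<Sum>i<a. A $$ (i, k) * v $ k * cnj (w $ i))"
    by (rule sum.swap)
  also have "\<dots> = v \<bullet>c (mat_adjoint A *\<^sub>v w)"
    using A v w
    by (auto simp: scalar_prod_def atLeast0LessThan sum_distrib_left sum_conjugate[simplified] mult_ac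
        intro!: sum.cong)
  finally show ?thesis .
qed

lemma mat_trace_mult_comm:
  assumes A: "A \<in> carrier_mat a b" and B: "B \<in> carrier_mat b a"
  shows "mat_trace (A * B) = mat_trace (B * (A :: complex mat))"
proof -
  have "mat_trace (A * B) = (\<Sum>i<a. \<Sum>k<b. A $$ (i, k) * B $$ (k, i))"
    using A B by (auto simp: mat_trace_def scalar_prod_def atLeast0LessThan intro!: sum.cong)
  also have "\<dots> = (\<Sum>k<b. \<Sum>i<a. B $$ (k, i) * A $$ (i, k))"
    by (subst sum.swap) (simp add: mult.commute)
  also have "\<dots> = mat_trace (B * A)"
    using A B by (auto simp: mat_trace_def scalar_prod_def atLeast0LessThan intro!: sum.cong)
  finally show ?thesis .
qed

lemma mat_trace_add:
  "A \<in> carrier_mat n n \<Longrightarrow> B \<in> carrier_mat n n \<Longrightarrow>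
   mat_trace (A + B) = mat_trace A + mat_trace (B :: complex mat)"
  by (auto simp: mat_trace_def sum.distrib)

lemma mat_trace_minus:
  "A \<in> carrier_mat n n \<Longrightarrow> B \<in> carrier_mat n n \<Longrightarrow>
   mat_trace (A - B) = mat_trace A - mat_trace (B :: complex mat)"
  by (auto simp: mat_trace_def sum_subtractf)

lemma mat_trace_smult: "A \<in> carrier_mat n n \<Longrightarrow> mat_trace (c \<cdot>\<^sub>m A) = c * mat_trace (A :: complex mat)"
  by (auto simp: mat_trace_def sum_distrib_left)

lemma mat_trace_one [simp]: "mat_trace (1\<^sub>m n :: complex mat) = of_nat n"
  by (simp add: mat_trace_def)

lemma mat_trace_zero [simp]: "mat_trace (0\<^sub>m n n :: complex mat) = 0"
  by (simp add: mat_trace_def)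

lemma msum_carrier: "(\<And>i. i < k \<Longrightarrow> f i \<in> carrier_mat n n) \<Longrightarrow> msum n f k \<in> carrier_mat n n"
  by (induction k) auto

lemma msum_cong: "(\<And>i. i < k \<Longrightarrow> f i = g i) \<Longrightarrow> msum n f k = msum n g k"
  by (induction k) auto

lemma mat_trace_mult_msum:
  assumes A: "A \<in> carrier_mat n n" and f: "\<And>i. i < k \<Longrightarrow> f i \<in> carrier_mat n n"
  shows "mat_trace (A * msum n f k) = (\<Sum>i<k. mat_trace (A * f i))"
  using f
proof (induction k)
  case (Suc k)
  have "msum n f k \<in> carrier_mat n n"
    using Suc.prems by (intro msum_carrier) auto
  with Suc A show ?case
    by (simp add: mult_add_distrib_mat[of _ n n] mat_trace_add[of _ n])
qed (use A in simp)

lemma msum_mult_left_right: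
  assumes A: "A \<in> carrier_mat n n" and B: "B \<in> carrier_mat n n"
    and f: "\<And>i. i < k \<Longrightarrow> f i \<in> carrier_mat n n"
  shows "msum n (\<lambda>i. A * f i * B) k = A * msum n f k * B"
  using f
proof (induction k)
  case (Suc k)
  have "msum n f k \<in> carrier_mat n n" and "f k \<in> carrier_mat n n"
    using Suc.prems by (auto intro: msum_carrier)
  with Suc A B show ?case
    by (simp add: add_mult_distrib_mat[of _ n n] mult_add_distrib_mat[of _ n n])
qed (use A B in simp)

section \<open>Sesquilinear forms and positive semidefinite matrices\<close>

definition sesq :: "complex mat \<Rightarrow> complex vec \<Rightarrow> complex vec \<Rightarrow> complex" where
  "sesq A x y = (A *\<^sub>v x) \<bullet>c y"

lemma sesq_expand:
  "A \<in> carrier_mat n n \<Longrightarrow> x \<in> carrier_vec n \<Longrightarrow> y \<in> carrier_vec n \<Longrightarrow>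
   sesq A x y = (\<Sum>a<n. \<Sum>b<n. A $$ (a, b) * x $ b * cnj (y $ a))"
  by (auto simp: sesq_def scalar_prod_def atLeast0LessThan sum_distrib_right intro!: sum.cong)

lemma sesq_minus_left:
  "A \<in> carrier_mat n n \<Longrightarrow> x \<in> carrier_vec n \<Longrightarrow> x' \<in> carrier_vec n \<Longrightarrow> y \<in> carrier_vec n \<Longrightarrow>
   sesq A (x - x') y = sesq A x y - sesq A x' y"
  by (simp add: sesq_def mult_minus_distrib_mat_vec[of _ n n] minus_scalar_prod_distrib[of _ n])

lemma sesq_minus_right:
  "A \<in> carrier_mat n n \<Longrightarrow> x \<in> carrier_vec n \<Longrightarrow> y \<in> carrier_vec n \<Longrightarrow> y' \<in> carrier_vec n \<Longrightarrow>
   sesq A x (y - y') = sesq A x y - sesq A x y'"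
  by (simp add: sesq_expand sum_subtractf[symmetric] right_diff_distrib)

lemma sesq_smult_left:
  "A \<in> carrier_mat n n \<Longrightarrow> x \<in> carrier_vec n \<Longrightarrow> y \<in> carrier_vec n \<Longrightarrow>
   sesq A (s \<cdot>\<^sub>v x) y = s * sesq A x y"
  by (simp add: sesq_expand sum_distrib_left mult_ac)

lemma sesq_smult_right:
  "A \<in> carrier_mat n n \<Longrightarrow> x \<in> carrier_vec n \<Longrightarrow> y \<in> carrier_vec n \<Longrightarrow>
   sesq A x (s \<cdot>\<^sub>v y) = cnj s * sesq A x y"
  by (simp add: sesq_expand sum_distrib_left mult_ac)

lemma sesq_minus_mat:
  "A \<in> carrier_mat n n \<Longrightarrow> B \<in> carrier_mat n n \<Longrightarrow> x \<in> carrier_vec n \<Longrightarrow> y \<in> carrier_vec n \<Longrightarrow>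
   sesq (A - B) x y = sesq A x y - sesq B x y"
  by (simp add: sesq_def minus_mult_distrib_mat_vec[of _ n n] minus_scalar_prod_distrib[of _ n])

lemma sesq_smult_mat:
  "A \<in> carrier_mat n n \<Longrightarrow> x \<in> carrier_vec n \<Longrightarrow> y \<in> carrier_vec n \<Longrightarrow>
   sesq (c \<cdot>\<^sub>m A) x y = c * sesq A x y"
  by (simp add: sesq_def scalar_prod_def sum_distrib_left mult_ac)

lemma mult_unit_vec:
  fixes A :: "complex mat"
  assumes A: "A \<in> carrier_mat n n" and k: "k < n"
  shows "A *\<^sub>v unit_vec n k = col A k"
proof (rule eq_vecI)
  fix i assume "i < dim_vec (col A k)"
  then show "(A *\<^sub>v unit_vec n k) $ i = col A k $ i"
    using A k scalar_prod_right_unit[OF k, of "row A i"] by auto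
qed (use A in auto)

lemma sesq_unit_vec_left:
  "A \<in> carrier_mat n n \<Longrightarrow> k < n \<Longrightarrow> sesq A (unit_vec n k) y = col A k \<bullet>c y"
  by (simp add: sesq_def mult_unit_vec)

lemma sesq_hermitian:
  assumes h: "hermitian A" and A: "A \<in> carrier_mat n n" and x: "x \<in> carrier_vec n" and y: "y \<in> carrier_vec n"
  shows "sesq A x y = cnj (sesq A y x)"
proof -
  have "sesq A x y = x \<bullet>c (A *\<^sub>v y)"
    using cscalar_prod_mat_adjoint[OF A x y] h by (simp add: sesq_def hermitian_def)
  also have "\<dots> = cnj (sesq A y x)"
    using A x y by (subst cscalar_prod_swap[of _ n]) (auto simp: sesq_def)
  finally show ?thesis .
qed

lemma psd_carrier: "psd n A \<Longrightarrow> A \<in> carrier_mat n n"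
  by (simp add: psd_def)

lemma psd_hermitian: "psd n A \<Longrightarrow> hermitian A"
  by (simp add: psd_def)

lemma psd_sesq_nonneg: "psd n A \<Longrightarrow> v \<in> carrier_vec n \<Longrightarrow> 0 \<le> Re (sesq A v v)"
  by (simp add: psd_def sesq_def)

lemma psdI:
  "A \<in> carrier_mat n n \<Longrightarrow> mat_adjoint A = A \<Longrightarrow> (\<And>v. v \<in> carrier_vec n \<Longrightarrow> 0 \<le> Re (sesq A v v)) \<Longrightarrow>
   psd n A"
  by (simp add: psd_def hermitian_def sesq_def)

lemma cscalar_prod_self_real:
  "Re (v \<bullet>c v) \<ge> 0" "v \<bullet>c v = of_real (Re (v \<bullet>c (v :: complex vec)))"
  using conjugate_square_ge_0_vec[of v] by (auto simp: less_eq_complex_def complex_eq_iff)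

lemma sesq_gram:
  assumes A: "A \<in> carrier_mat n k" and v: "v \<in> carrier_vec n"
  shows "sesq (A * mat_adjoint A) v v = (mat_adjoint A *\<^sub>v v) \<bullet>c (mat_adjoint A *\<^sub>v v)"
proof -
  have w: "mat_adjoint A *\<^sub>v v \<in> carrier_vec k" using A v by (intro mult_mat_vec_carrier) auto
  show ?thesis
    using cscalar_prod_mat_adjoint[OF A w v] assoc_mult_mat_vec[OF A mat_adjoint_carrier[OF A] v]
    by (simp add: sesq_def)
qed

lemma sesq_mult_vec_congruence:
  assumes A: "A \<in> carrier_mat n n" and B: "B \<in> carrier_mat n k" and w: "w \<in> carrier_vec k"
  shows "sesq A (B *\<^sub>v w) (B *\<^sub>v w) = sesq (mat_adjoint B * A * B) w w"
proof -
  have Bw: "B *\<^sub>v w \<in> carrier_vec n" using B w by simp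
  have Ba: "mat_adjoint B \<in> carrier_mat k n" using B by simp
  have "sesq A (B *\<^sub>v w) (B *\<^sub>v w) = (mat_adjoint B *\<^sub>v (A *\<^sub>v (B *\<^sub>v w))) \<bullet>c w"
    using cscalar_prod_mat_adjoint[OF Ba _ w, of "A *\<^sub>v (B *\<^sub>v w)"] A Bw by (simp add: sesq_def)
  also have "mat_adjoint B *\<^sub>v (A *\<^sub>v (B *\<^sub>v w)) = (mat_adjoint B * A * B) *\<^sub>v w"
    using assoc_mult_mat_vec[OF mult_carrier_mat[OF Ba A] B w] assoc_mult_mat_vec[OF Ba A Bw] by simp
  finally show ?thesis by (simp add: sesq_def)
qed

lemma sesq_left_inverse:
  assumes A: "A \<in> carrier_mat n n" and B: "B \<in> carrier_mat n n" and BA: "B * A = 1\<^sub>m n"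
    and u: "u \<in> carrier_vec n"
  shows "sesq B (A *\<^sub>v u) (A *\<^sub>v u) = cnj (sesq A u u)"
proof -
  have "B *\<^sub>v (A *\<^sub>v u) = u" using assoc_mult_mat_vec[OF B A u] BA u by simp
  then have "sesq B (A *\<^sub>v u) (A *\<^sub>v u) = u \<bullet>c (A *\<^sub>v u)" by (simp add: sesq_def)
  also have "\<dots> = cnj (sesq A u u)" unfolding sesq_def using A u by (intro cscalar_prod_swap) auto
  finally show ?thesis .
qed

lemma psd_gram:
  assumes A: "A \<in> carrier_mat n k"
  shows "psd n (A * mat_adjoint A)"
proof (rule psdI)
  show "A * mat_adjoint A \<in> carrier_mat n n" using A by simp
  show "mat_adjoint (A * mat_adjoint A) = A * mat_adjoint A"
    using mat_adjoint_mult[OF A mat_adjoint_carrier[OF A]] by simp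
  show "0 \<le> Re (sesq (A * mat_adjoint A) v v)" if "v \<in> carrier_vec n" for v
    using sesq_gram[OF A that] cscalar_prod_self_real(1) by simp
qed

lemma psd_inverse:
  assumes S: "psd n S" and T: "T \<in> carrier_mat n n" and TS: "T * S = 1\<^sub>m n"
  shows "S * T = 1\<^sub>m n" and "psd n T"
proof -
  have Sc: "S \<in> carrier_mat n n" and hS: "mat_adjoint S = S"
    using S by (auto simp: psd_def hermitian_def)
  show ST: "S * T = 1\<^sub>m n" using mat_mult_left_right_inverse[OF T Sc TS] .
  have Ta: "mat_adjoint T \<in> carrier_mat n n" using T by simp
  have "S * mat_adjoint T = 1\<^sub>m n"
    using arg_cong[OF TS, of mat_adjoint] mat_adjoint_mult[OF T Sc] hS by simp
  then have "mat_adjoint T = T"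
    using assoc_mult_mat[OF T Sc Ta] TS Ta T by simp
  then show "psd n T"
  proof (intro psdI[OF T])
    fix v :: "complex vec" assume v: "v \<in> carrier_vec n"
    define x where "x = T *\<^sub>v v"
    have x: "x \<in> carrier_vec n" using T v by (simp add: x_def)
    have "v = S *\<^sub>v x"
      using Sc T v ST by (metis assoc_mult_mat_vec one_mult_mat_vec x_def)
    then show "0 \<le> Re (sesq T v v)"
      using sesq_left_inverse[OF Sc T TS x] psd_sesq_nonneg[OF S x] by simp
  qed
qed

lemma quadratic_nonneg_imp_le:
  fixes U W a :: real
  assumes quad: "\<And>s. 0 \<le> U - 2 * s * W + s * s * a * W" and W: "0 \<le> W" and a: "0 \<le> a"
  shows "W \<le> a * U"
proof (cases "W = 0")
  case True
  then show ?thesis using quad[of 0] a by simp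
next
  case False
  with W have Wp: "0 < W" by simp
  show ?thesis
  proof (cases "a = 0")
    case True
    have "0 \<le> U - 2 * ((U + 1) / (2 * W)) * W" using quad[of "(U + 1) / (2 * W)"] True by simp
    also have "\<dots> = -1" using Wp by (simp add: field_simps)
    finally show ?thesis by simp
  next
    case False
    with a have ap: "0 < a" by simp
    have "0 \<le> U - 2 * (1 / a) * W + (1 / a) * (1 / a) * a * W" using quad[of "1 / a"] .
    also have "\<dots> = U - W / a" using ap by (simp add: field_simps)
    finally show ?thesis using ap by (simp add: field_simps)
  qed
qed

lemma psd_cauchy_schwarz:
  assumes T: "psd n T" and u: "u \<in> carrier_vec n" and y: "y \<in> carrier_vec n"
  shows "(cmod (sesq T u y))\<^sup>2 \<le> Re (sesq T u u) * Re (sesq T y y)"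
proof -
  have Tc: "T \<in> carrier_mat n n" and h: "hermitian T" using T by (auto simp: psd_def)
  define \<beta> where "\<beta> = sesq T u y"
  define B where "B = (cmod \<beta>)\<^sup>2"
  have \<beta>\<beta>: "\<beta> * cnj \<beta> = of_real B" unfolding B_def by (rule complex_norm_square[symmetric])
  have yu: "sesq T y u = cnj \<beta>" using sesq_hermitian[OF h Tc y u] by (simp add: \<beta>_def)
  have "0 \<le> Re (sesq T u u) - 2 * s * B + s * s * Re (sesq T y y) * B" for s :: real
  proof -
    define z where "z = u - (of_real s * \<beta>) \<cdot>\<^sub>v y"
    have z: "z \<in> carrier_vec n" using u y by (simp add: z_def)
    have "sesq T z z = sesq T u u - 2 * of_real s * (\<beta> * cnj \<beta>)
        + of_real s * of_real s * (\<beta> * cnj \<beta>) * sesq T y y"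
      using Tc u y yu
      by (simp add: z_def \<beta>_def[symmetric] sesq_minus_left[of _ n] sesq_minus_right[of _ n]
          sesq_smult_left[of _ n] sesq_smult_right[of _ n] algebra_simps)
    then have "Re (sesq T z z) = Re (sesq T u u) - 2 * s * B + s * s * Re (sesq T y y) * B"
      unfolding \<beta>\<beta> by simp
    then show ?thesis using psd_sesq_nonneg[OF T z] by simp
  qed
  then have "B \<le> Re (sesq T y y) * Re (sesq T u u)"
    using quadratic_nonneg_imp_le psd_sesq_nonneg[OF T y] by (simp add: B_def mult_ac)
  then show ?thesis by (simp add: B_def \<beta>_def mult.commute)
qed

lemma conjugate_unit_vec [simp]: "conjugate (unit_vec n k :: complex vec) = unit_vec n k"
  by (rule eq_vecI) (auto simp: unit_vec_def)

definition outer_prod :: "complex vec \<Rightarrow> complex mat" where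
  "outer_prod c = mat (dim_vec c) (dim_vec c) (\<lambda>(a, b). c $ a * cnj (c $ b))"

lemma dim_row_outer_prod [simp]: "dim_row (outer_prod c) = dim_vec c"
  unfolding outer_prod_def by simp

lemma dim_col_outer_prod [simp]: "dim_col (outer_prod c) = dim_vec c"
  unfolding outer_prod_def by simp

lemma outer_prod_carrier [simp]: "c \<in> carrier_vec n \<Longrightarrow> outer_prod c \<in> carrier_mat n n"
  unfolding outer_prod_def by simp

lemma index_outer_prod [simp]:
  "c \<in> carrier_vec n \<Longrightarrow> a < n \<Longrightarrow> b < n \<Longrightarrow> outer_prod c $$ (a, b) = c $ a * cnj (c $ b)"
  unfolding outer_prod_def by simp

lemma outer_prod_mult_vec: "c \<in> carrier_vec n \<Longrightarrow> v \<in> carrier_vec n \<Longrightarrow> outer_prod c *\<^sub>v v = (v \<bullet>c c) \<cdot>\<^sub>v c"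
  unfolding outer_prod_def
  by (rule eq_vecI) (auto simp: scalar_prod_def sum_distrib_left mult_ac)

lemma smult_mult_mat_vec:
  "A \<in> carrier_mat n m \<Longrightarrow> v \<in> carrier_vec m \<Longrightarrow> (c \<cdot>\<^sub>m A) *\<^sub>v v = c \<cdot>\<^sub>v (A *\<^sub>v (v :: complex vec))"
  by (rule eq_vecI) (auto simp: scalar_prod_def sum_distrib_left mult_ac)

lemma mat_trace_mult_outer_prod:
  assumes X: "X \<in> carrier_mat n n" and c: "c \<in> carrier_vec n"
  shows "mat_trace (X * outer_prod c) = sesq X c c"
  unfolding sesq_expand[OF X c c] mat_trace_def
  using X c by (auto simp: scalar_prod_def atLeast0LessThan sum_distrib_right mult_ac intro!: sum.cong)

lemma hermitian_index:
  "hermitian A \<Longrightarrow> A \<in> carrier_mat n n \<Longrightarrow> a < n \<Longrightarrow> b < n \<Longrightarrow> A $$ (a, b) = cnj (A $$ (b, a))"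
  unfolding hermitian_def by (metis index_mat_adjoint carrier_matD)

lemma psd_diag_real: "psd n P \<Longrightarrow> k < n \<Longrightarrow> cnj (P $$ (k, k)) = P $$ (k, k)"
  using hermitian_index[OF psd_hermitian psd_carrier] by metis

lemma psd_diag_nonneg:
  assumes P: "psd n P" and k: "k < n"
  shows "0 \<le> Re (P $$ (k, k))"
proof -
  have "sesq P (unit_vec n k) (unit_vec n k) = P $$ (k, k)"
    using psd_carrier[OF P] k by (simp add: sesq_unit_vec_left)
  then show ?thesis using psd_sesq_nonneg[OF P, of "unit_vec n k"] by simp
qed

lemma psd_zero_diag_col:
  assumes P: "psd n P" and k: "k < n" and d: "P $$ (k, k) = 0"
  shows "col P k = 0\<^sub>v n"
proof -
  have Pc: "P \<in> carrier_mat n n" using psd_carrier[OF P] .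
  define c where "c = col P k"
  define e :: "complex vec" where "e = unit_vec n k"
  have c: "c \<in> carrier_vec n" and e: "e \<in> carrier_vec n" using Pc by (auto simp: c_def e_def)
  have "sesq P e e = 0" using Pc k d by (simp add: e_def sesq_unit_vec_left)
  then have "(cmod (sesq P e c))\<^sup>2 \<le> 0" using psd_cauchy_schwarz[OF P e c] by simp
  moreover have "sesq P e c = c \<bullet>c c" using Pc k by (simp add: e_def c_def sesq_unit_vec_left)
  ultimately have "c \<bullet>c c = 0" by simp
  then show ?thesis using c by (simp add: c_def)
qed

text \<open>This is the Schur complement of the pivot: with \<open>w = v - t e\<^sub>k\<close> chosen so that
  \<open>e\<^sub>k\<^sup>* P w = 0\<close>, one gets \<open>v\<^sup>* P' v = w\<^sup>* P w \<ge> 0\<close>.\<close>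

lemma psd_minus_pivot_outer_prod:
  assumes P: "psd n P" and k: "k < n" and d0: "P $$ (k, k) \<noteq> 0"
  shows "psd n (P - (1 / P $$ (k, k)) \<cdot>\<^sub>m outer_prod (col P k))"
proof -
  define d where "d = P $$ (k, k)"
  define c where "c = col P k"
  define e :: "complex vec" where "e = unit_vec n k"
  define P' where "P' = P - (1 / d) \<cdot>\<^sub>m outer_prod c"
  have Pc: "P \<in> carrier_mat n n" and h: "hermitian P" using P by (auto simp: psd_def)
  have c: "c \<in> carrier_vec n" and e: "e \<in> carrier_vec n" using Pc by (auto simp: c_def e_def)
  have dr: "cnj d = d" using psd_diag_real[OF P k] by (simp add: d_def)
  have P'c: "P' \<in> carrier_mat n n" using Pc c by (simp add: P'_def minus_carrier_mat)
  have "mat_adjoint P' = P'"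
  proof (rule eq_matI)
    fix a b assume "a < dim_row P'" "b < dim_col P'"
    with P'c have a: "a < n" and b: "b < n" by auto
    show "mat_adjoint P' $$ (a, b) = P' $$ (a, b)"
      using a b Pc c P'c hermitian_index[OF h Pc a b] dr by (auto simp: P'_def c_def mult_ac)
  qed (use P'c in auto)
  moreover have "0 \<le> Re (sesq P' v v)" if v: "v \<in> carrier_vec n" for v
  proof -
    define t where "t = (v \<bullet>c c) / d"
    define w where "w = v - t \<cdot>\<^sub>v e"
    have w: "w \<in> carrier_vec n" using v e by (simp add: w_def)
    have "P' *\<^sub>v v = P *\<^sub>v v - (1 / d) \<cdot>\<^sub>v (outer_prod c *\<^sub>v v)"
      using Pc c v by (simp add: P'_def minus_mult_distrib_mat_vec[of _ n n] smult_mult_mat_vec[of _ n n])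
    also have "\<dots> = P *\<^sub>v v - t \<cdot>\<^sub>v c"
      using c v by (simp add: outer_prod_mult_vec t_def smult_smult_assoc)
    also have "\<dots> = P *\<^sub>v w"
      unfolding w_def using Pc v e mult_unit_vec[OF Pc k]
      by (simp add: e_def c_def mult_minus_distrib_mat_vec[of _ n n] mult_mat_vec[of _ n n])
    finally have "sesq P' v v = sesq P w v" by (simp add: sesq_def)
    have ee: "sesq P e e = d" using Pc k by (simp add: e_def d_def sesq_unit_vec_left)
    have ve: "sesq P v e = v \<bullet>c c"
      using sesq_hermitian[OF h Pc v e] sesq_unit_vec_left[OF Pc k, of v] cscalar_prod_swap[OF v c]
      by (simp add: e_def c_def)
    have we: "sesq P w e = 0"
      unfolding w_def using Pc v e ee ve d0
      by (simp add: d_def[symmetric] sesq_minus_left[of _ n] sesq_smult_left[of _ n] t_def)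
    have "sesq P w (v - t \<cdot>\<^sub>v e) = sesq P w v - cnj t * sesq P w e"
      using Pc v e w by (simp add: sesq_minus_right[of _ n] sesq_smult_right[of _ n])
    then have "sesq P w w = sesq P w v" using we by (simp add: w_def[symmetric])
    with \<open>sesq P' v v = sesq P w v\<close> show ?thesis using psd_sesq_nonneg[OF P w] by simp
  qed
  ultimately show ?thesis using psdI[OF P'c] by (simp add: P'_def c_def d_def)
qed

definition block_supported :: "nat \<Rightarrow> nat \<Rightarrow> complex mat \<Rightarrow> bool" where
  "block_supported n k P \<longleftrightarrow> (\<forall>a<n. \<forall>b<n. k \<le> a \<or> k \<le> b \<longrightarrow> P $$ (a, b) = 0)"

lemma block_supported_zero_pivot:
  assumes P: "psd n P" and supp: "block_supported n (Suc k) P" and k: "k < n" and d: "P $$ (k, k) = 0"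
  shows "block_supported n k P"
  unfolding block_supported_def
proof (intro allI impI)
  fix a b assume a: "a < n" and b: "b < n" and ab: "k \<le> a \<or> k \<le> b"
  have Pc: "P \<in> carrier_mat n n" and h: "hermitian P" using P by (auto simp: psd_def)
  have col0: "P $$ (i, k) = 0" if "i < n" for i
    using arg_cong[OF psd_zero_diag_col[OF P k d], of "\<lambda>v. v $ i"] that Pc k by simp
  consider "a = k" | "b = k" | "Suc k \<le> a \<or> Suc k \<le> b" using ab by linarith
  then show "P $$ (a, b) = 0"
    by cases (use hermitian_index[OF h Pc a b] col0 a b supp in \<open>auto simp: block_supported_def\<close>)
qed

lemma block_supported_minus_pivot:
  assumes P: "psd n P" and supp: "block_supported n (Suc k) P" and k: "k < n" and d0: "P $$ (k, k) \<noteq> 0"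
  shows "block_supported n k (P - (1 / P $$ (k, k)) \<cdot>\<^sub>m outer_prod (col P k))"
  unfolding block_supported_def
proof (intro allI impI)
  fix a b assume a: "a < n" and b: "b < n" and ab: "k \<le> a \<or> k \<le> b"
  have Pc: "P \<in> carrier_mat n n" and h: "hermitian P" using P by (auto simp: psd_def)
  define d where "d = P $$ (k, k)"
  have dr: "cnj d = d" using psd_diag_real[OF P k] by (simp add: d_def)
  have entry: "(P - (1 / d) \<cdot>\<^sub>m outer_prod (col P k)) $$ (a, b)
      = P $$ (a, b) - (1 / d) * (P $$ (a, k) * cnj (P $$ (b, k)))"
    using a b Pc k index_outer_prod[of "col P k" n a b] by simp
  consider "a = k" | "b = k" | "Suc k \<le> a" | "Suc k \<le> b" using ab by linarith
  then show "(P - (1 / P $$ (k, k)) \<cdot>\<^sub>m outer_prod (col P k)) $$ (a, b) = 0"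
  proof cases
    case 1
    then show ?thesis using entry hermitian_index[OF h Pc b k] d0 by (simp add: d_def)
  next
    case 2
    then show ?thesis using entry dr d0 by (simp add: d_def)
  qed (use entry supp a b k in \<open>auto simp: block_supported_def d_def\<close>)
qed

text \<open>Induction on the size \<open>k\<close> of a leading block containing the support of \<open>P\<close>: the pivot
  step splits off a rank-one term \<open>c c\<^sup>*/d\<close>, whose contribution \<open>c\<^sup>* X c / d\<close> is nonnegative.\<close>

lemma mat_trace_mult_psd_nonneg_block:
  assumes X: "psd n X"
  shows "psd n P \<Longrightarrow> block_supported n k P \<Longrightarrow> 0 \<le> Re (mat_trace (X * P))"
proof (induction k arbitrary: P)
  case 0
  then have "P = 0\<^sub>m n n" using psd_carrier[of n P] by (intro eq_matI) (auto simp: block_supported_def)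
  then show ?case using psd_carrier[OF X] by simp
next
  case (Suc k)
  note P = Suc.prems(1) and supp = Suc.prems(2)
  have Pc: "P \<in> carrier_mat n n" using psd_carrier[OF P] .
  have Xc: "X \<in> carrier_mat n n" using psd_carrier[OF X] .
  consider (outside) "n \<le> k" | (zero) "k < n" "P $$ (k, k) = 0" | (pivot) "k < n" "P $$ (k, k) \<noteq> 0"
    by linarith
  then show ?case
  proof cases
    case outside
    then show ?thesis using Suc.IH[OF P] by (auto simp: block_supported_def)
  next
    case zero
    then show ?thesis using Suc.IH[OF P block_supported_zero_pivot[OF P supp]] by blast
  next
    case pivot
    define d where "d = P $$ (k, k)"
    define c where "c = col P k"
    define P' where "P' = P - (1 / d) \<cdot>\<^sub>m outer_prod c"
    have c: "c \<in> carrier_vec n" using Pc by (auto simp: c_def)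
    have dr: "cnj d = d" using psd_diag_real[OF P pivot(1)] by (simp add: d_def)
    have dpos: "0 < Re d"
      using psd_diag_nonneg[OF P pivot(1)] pivot(2) dr by (auto simp: d_def complex_eq_iff)
    have P': "psd n P'" using psd_minus_pivot_outer_prod[OF P pivot] by (simp add: P'_def c_def d_def)
    have IH: "0 \<le> Re (mat_trace (X * P'))"
      using Suc.IH[OF P'] block_supported_minus_pivot[OF P supp pivot] by (simp add: P'_def c_def d_def)
    have "P = P' + (1 / d) \<cdot>\<^sub>m outer_prod c" using Pc c by (intro eq_matI) (auto simp: P'_def)
    then have "mat_trace (X * P) = mat_trace (X * P') + (1 / d) * sesq X c c"
      using Xc psd_carrier[OF P'] c
      by (simp add: mult_add_distrib_mat[of _ n n] mult_smult_distrib[of X n n _ n] mat_trace_add[of _ n]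
          mat_trace_smult[of _ n] mat_trace_mult_outer_prod)
    moreover have "Re ((1 / d) * sesq X c c) = Re (sesq X c c) / Re d"
    proof -
      have "d = of_real (Re d)" using dr by (simp add: complex_eq_iff)
      then show ?thesis by (metis Re_divide_of_real mult_1 times_divide_eq_left)
    qed
    ultimately show ?thesis using IH psd_sesq_nonneg[OF X c] dpos by simp
  qed
qed

lemma mat_trace_mult_psd_nonneg: "psd n X \<Longrightarrow> psd n P \<Longrightarrow> 0 \<le> Re (mat_trace (X * P))"
  using mat_trace_mult_psd_nonneg_block[of n X P n] by (simp add: block_supported_def)

section \<open>Optimality of the least-squares measurement\<close>

text \<open>With \<open>v = T u\<close> and \<open>w = \<psi>\<^sup>* v\<close>, Cauchy-Schwarz for the form of \<open>T\<close> applied to \<open>u\<close> and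
  \<open>\<psi> w\<close> gives \<open>|w|\<^sup>4 \<le> (u\<^sup>* T u) (a |w|\<^sup>2)\<close>.\<close>

lemma sesq_gram_le_scaled:
  assumes S: "psd n S" and T: "T \<in> carrier_mat n n" and TS: "T * S = 1\<^sub>m n"
    and \<psi>: "\<psi> \<in> carrier_mat n r"
    and compress: "mat_adjoint \<psi> * T * \<psi> = of_real a \<cdot>\<^sub>m 1\<^sub>m r" and a: "0 \<le> a"
    and v: "v \<in> carrier_vec n"
  shows "Re (sesq (\<psi> * mat_adjoint \<psi>) v v) \<le> a * Re (sesq S v v)"
proof -
  have Sc: "S \<in> carrier_mat n n" using psd_carrier[OF S] .
  have ST: "S * T = 1\<^sub>m n" and Tpsd: "psd n T" using psd_inverse[OF S T TS] by auto
  have \<psi>a: "mat_adjoint \<psi> \<in> carrier_mat r n" using \<psi> by simp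
  define u where "u = S *\<^sub>v v"
  define w where "w = mat_adjoint \<psi> *\<^sub>v v"
  define y where "y = \<psi> *\<^sub>v w"
  define W where "W = Re (w \<bullet>c w)"
  have u: "u \<in> carrier_vec n" unfolding u_def using Sc v by (rule mult_mat_vec_carrier)
  have w: "w \<in> carrier_vec r" unfolding w_def using \<psi>a v by (rule mult_mat_vec_carrier)
  have y: "y \<in> carrier_vec n" unfolding y_def using \<psi> w by (rule mult_mat_vec_carrier)
  have vu: "v = T *\<^sub>v u"
    using Sc T v TS by (metis assoc_mult_mat_vec one_mult_mat_vec u_def)
  have Ww: "w \<bullet>c w = of_real W" using cscalar_prod_self_real(2) by (simp add: W_def)
  have uy: "sesq T u y = w \<bullet>c w"
    using cscalar_prod_mat_adjoint[OF \<psi>a v w] by (simp add: sesq_def y_def vu[symmetric] w_def)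
  have "sesq (1\<^sub>m r) w w = w \<bullet>c w" using w by (simp add: sesq_def)
  then have yy: "sesq T y y = of_real a * (w \<bullet>c w)"
    using sesq_mult_vec_congruence[OF T \<psi> w] w by (simp add: y_def compress sesq_smult_mat[of _ r])
  have "W * W \<le> Re (sesq T u u) * (a * W)"
    using psd_cauchy_schwarz[OF Tpsd u y] uy yy Ww by (simp add: power2_eq_square)
  then have "W \<le> a * Re (sesq T u u)"
    using psd_sesq_nonneg[OF Tpsd u] a cscalar_prod_self_real(1)[of w]
    by (cases "W = 0") (auto simp: W_def mult_ac mult_le_cancel_left_pos)
  moreover have "sesq (\<psi> * mat_adjoint \<psi>) v v = w \<bullet>c w" using sesq_gram[OF \<psi> v] by (simp add: w_def)
  moreover have "sesq S v v = cnj (sesq T u u)" using sesq_left_inverse[OF T Sc ST u] by (simp add: vu)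
  ultimately show ?thesis by (simp add: W_def)
qed

lemma psd_scaled_minus_gram:
  assumes S: "psd n S" and T: "T \<in> carrier_mat n n" and TS: "T * S = 1\<^sub>m n"
    and \<psi>: "\<psi> \<in> carrier_mat n r"
    and compress: "mat_adjoint \<psi> * T * \<psi> = of_real a \<cdot>\<^sub>m 1\<^sub>m r" and a: "0 \<le> a"
  shows "psd n (of_real a \<cdot>\<^sub>m S - \<psi> * mat_adjoint \<psi>)"
proof (rule psdI)
  have Sc: "S \<in> carrier_mat n n" and hS: "mat_adjoint S = S" using S by (auto simp: psd_def hermitian_def)
  have Gc: "\<psi> * mat_adjoint \<psi> \<in> carrier_mat n n" and hG: "mat_adjoint (\<psi> * mat_adjoint \<psi>) = \<psi> * mat_adjoint \<psi>"
    using psd_gram[OF \<psi>] by (auto simp: psd_def hermitian_def)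
  show "of_real a \<cdot>\<^sub>m S - \<psi> * mat_adjoint \<psi> \<in> carrier_mat n n"
    using Sc Gc by (simp add: minus_carrier_mat)
  show "mat_adjoint (of_real a \<cdot>\<^sub>m S - \<psi> * mat_adjoint \<psi>) = of_real a \<cdot>\<^sub>m S - \<psi> * mat_adjoint \<psi>"
    using Sc Gc hS hG by (simp add: mat_adjoint_minus[of _ n n] mat_adjoint_smult)
  show "0 \<le> Re (sesq (of_real a \<cdot>\<^sub>m S - \<psi> * mat_adjoint \<psi>) v v)" if v: "v \<in> carrier_vec n" for v
    using sesq_gram_le_scaled[OF S T TS \<psi> compress a v] Sc Gc v
    by (simp add: sesq_minus_mat[of _ n] sesq_smult_mat[of _ n])
qed

lemma index_adjoint_mult_mult_diag:
  assumes \<psi>: "\<psi> \<in> carrier_mat n r" and T: "T \<in> carrier_mat n n" and j: "j < r"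
  shows "(mat_adjoint \<psi> * T * \<psi>) $$ (j, j) = sesq T (col \<psi> j) (col \<psi> j)"
proof -
  have x: "col \<psi> j \<in> carrier_vec n" using \<psi> by auto
  have row: "row (mat_adjoint \<psi>) j = conjugate (col \<psi> j)" using \<psi> j by (intro eq_vecI) auto
  have "mat_adjoint \<psi> * T * \<psi> = mat_adjoint \<psi> * (T * \<psi>)"
    using assoc_mult_mat[OF mat_adjoint_carrier[OF \<psi>] T \<psi>] .
  also have "\<dots> $$ (j, j) = conjugate (col \<psi> j) \<bullet> (T *\<^sub>v col \<psi> j)"
    using \<psi> T j row col_mult2[OF T \<psi> j] by simp
  also have "\<dots> = sesq T (col \<psi> j) (col \<psi> j)"
    using conjugate_vec_sprod_comm[of "T *\<^sub>v col \<psi> j" n "col \<psi> j"] T x by (simp add: sesq_def)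
  finally show ?thesis .
qed

lemma scalar_compression_real_nonneg:
  assumes T: "psd n T" and \<psi>: "\<psi> \<in> carrier_mat n r" and r: "0 < r"
    and compress: "mat_adjoint \<psi> * T * \<psi> = c \<cdot>\<^sub>m 1\<^sub>m r"
  shows "c = of_real (Re c)" and "0 \<le> Re c"
proof -
  have Tc: "T \<in> carrier_mat n n" using psd_carrier[OF T] .
  have x: "col \<psi> 0 \<in> carrier_vec n" using \<psi> by auto
  have c: "c = sesq T (col \<psi> 0) (col \<psi> 0)"
    using index_adjoint_mult_mult_diag[OF \<psi> Tc r] r by (simp add: compress)
  then show "c = of_real (Re c)"
    using sesq_hermitian[OF psd_hermitian[OF T] Tc x x] by (simp add: complex_eq_iff)
  show "0 \<le> Re c" using psd_sesq_nonneg[OF T x] c by simp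
qed

lemma lsm_is_measurement:
  assumes S: "psd n S" and T: "T \<in> carrier_mat n n" and TS: "T * S = 1\<^sub>m n"
    and SS: "S * S = msum n (\<lambda>i. \<psi> i * mat_adjoint (\<psi> i)) m"
    and \<psi>: "\<And>i. i < m \<Longrightarrow> \<psi> i \<in> carrier_mat n (r i)"
  shows "is_measurement n m (\<lambda>i. T * \<psi> i * mat_adjoint (T * \<psi> i))"
proof -
  have Sc: "S \<in> carrier_mat n n" using psd_carrier[OF S] .
  have ST: "S * T = 1\<^sub>m n" and hT: "mat_adjoint T = T"
    using psd_inverse[OF S T TS] by (auto simp: psd_def hermitian_def)
  define G where "G i = \<psi> i * mat_adjoint (\<psi> i)" for i
  have Gc: "G i \<in> carrier_mat n n" if "i < m" for i using \<psi>[OF that] by (simp add: G_def)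
  have "T * \<psi> i * mat_adjoint (T * \<psi> i) = T * G i * T" if i: "i < m" for i
  proof -
    have \<psi>a: "mat_adjoint (\<psi> i) \<in> carrier_mat (r i) n" using \<psi>[OF i] by simp
    have "T * \<psi> i * mat_adjoint (T * \<psi> i) = T * \<psi> i * (mat_adjoint (\<psi> i) * T)"
      using mat_adjoint_mult[OF T \<psi>[OF i]] hT by simp
    also have "\<dots> = T * G i * T"
      using assoc_mult_mat[OF mult_carrier_mat[OF T \<psi>[OF i]] \<psi>a T] assoc_mult_mat[OF T \<psi>[OF i] \<psi>a]
      by (simp add: G_def)
    finally show ?thesis .
  qed
  then have "msum n (\<lambda>i. T * \<psi> i * mat_adjoint (T * \<psi> i)) m = msum n (\<lambda>i. T * G i * T) m"
    by (rule msum_cong)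
  also have "\<dots> = T * (S * S) * T"
    using msum_mult_left_right[OF T T Gc] SS by (simp add: G_def)
  also have "\<dots> = (T * S) * (S * T)"
    using assoc_mult_mat[OF T Sc mult_carrier_mat[OF Sc T]] assoc_mult_mat[OF Sc Sc T]
      assoc_mult_mat[OF T mult_carrier_mat[OF Sc Sc] T]
    by simp
  also have "\<dots> = 1\<^sub>m n" using TS ST by simp
  finally have "msum n (\<lambda>i. T * \<psi> i * mat_adjoint (T * \<psi> i)) m = 1\<^sub>m n" .
  moreover have "psd n (T * \<psi> i * mat_adjoint (T * \<psi> i))" if "i < m" for i
    using psd_gram[OF mult_carrier_mat[OF T \<psi>[OF that]]] .
  ultimately show ?thesis unfolding is_measurement_def by blast
qed

lemma mat_trace_mult_gram:
  assumes A: "A \<in> carrier_mat n n" and \<psi>: "\<psi> \<in> carrier_mat n r"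
    and compress: "mat_adjoint \<psi> * A * \<psi> = c \<cdot>\<^sub>m 1\<^sub>m r"
  shows "mat_trace (A * (\<psi> * mat_adjoint \<psi>)) = c * of_nat r"
proof -
  have \<psi>a: "mat_adjoint \<psi> \<in> carrier_mat r n" using \<psi> by simp
  have "mat_trace (A * (\<psi> * mat_adjoint \<psi>)) = mat_trace ((A * \<psi>) * mat_adjoint \<psi>)"
    using assoc_mult_mat[OF A \<psi> \<psi>a] by simp
  also have "\<dots> = mat_trace (mat_adjoint \<psi> * (A * \<psi>))"
    using mat_trace_mult_comm[OF mult_carrier_mat[OF A \<psi>] \<psi>a] .
  also have "\<dots> = mat_trace (c \<cdot>\<^sub>m 1\<^sub>m r)"
    using assoc_mult_mat[OF \<psi>a A \<psi>] compress by simp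
  finally show ?thesis by (simp add: mat_trace_smult[of _ r])
qed

lemma mat_trace_gram_mult_lsm:
  assumes T: "T \<in> carrier_mat n n" and hT: "mat_adjoint T = T" and \<psi>: "\<psi> \<in> carrier_mat n r"
    and compress: "mat_adjoint \<psi> * T * \<psi> = c \<cdot>\<^sub>m 1\<^sub>m r"
  shows "mat_trace (\<psi> * mat_adjoint \<psi> * (T * \<psi> * mat_adjoint (T * \<psi>))) = c * c * of_nat r"
proof -
  define M where "M = mat_adjoint \<psi> * T"
  have \<psi>a: "mat_adjoint \<psi> \<in> carrier_mat r n" using \<psi> by simp
  have M: "M \<in> carrier_mat r n" using \<psi>a T by (simp add: M_def)
  have T\<psi>: "T * \<psi> \<in> carrier_mat n r" using T \<psi> by simp
  have M\<psi>: "M * \<psi> = c \<cdot>\<^sub>m 1\<^sub>m r" using compress by (simp add: M_def)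
  have "\<psi> * mat_adjoint \<psi> * (T * \<psi> * mat_adjoint (T * \<psi>)) = \<psi> * (mat_adjoint \<psi> * (T * \<psi>) * M)"
    using mat_adjoint_mult[OF T \<psi>] hT assoc_mult_mat[OF \<psi> \<psi>a mult_carrier_mat[OF T\<psi> M]]
      assoc_mult_mat[OF \<psi>a T\<psi> M]
    by (simp add: M_def)
  also have "mat_adjoint \<psi> * (T * \<psi>) = c \<cdot>\<^sub>m 1\<^sub>m r"
    using assoc_mult_mat[OF \<psi>a T \<psi>] M\<psi> by (simp add: M_def)
  also have "\<psi> * ((c \<cdot>\<^sub>m 1\<^sub>m r) * M) = c \<cdot>\<^sub>m (\<psi> * M)"
    using mult_smult_assoc_mat[OF one_carrier_mat M] mult_smult_distrib[OF \<psi> M] M by simp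
  finally have "mat_trace (\<psi> * mat_adjoint \<psi> * (T * \<psi> * mat_adjoint (T * \<psi>))) = c * mat_trace (M * \<psi>)"
    using \<psi> M mat_trace_mult_comm[OF \<psi> M] by (simp add: mat_trace_smult[of _ n])
  then show ?thesis using M\<psi> by (simp add: mat_trace_smult[of _ r])
qed

lemma lsm_detection_bound:
  assumes S: "psd n S" and T: "T \<in> carrier_mat n n" and TS: "T * S = 1\<^sub>m n"
    and \<psi>: "\<And>i. i < m \<Longrightarrow> \<psi> i \<in> carrier_mat n (r i)"
    and compress: "\<And>i. i < m \<Longrightarrow> mat_adjoint (\<psi> i) * T * \<psi> i = of_real a \<cdot>\<^sub>m 1\<^sub>m (r i)"
    and a: "0 \<le> a" and Pm: "is_measurement n m Pm"
  shows "(\<Sum>i<m. Re (mat_trace (\<psi> i * mat_adjoint (\<psi> i) * Pm i))) \<le> a * Re (mat_trace S)"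
proof -
  have Sc: "S \<in> carrier_mat n n" using psd_carrier[OF S] .
  have Pmpsd: "psd n (Pm i)" if "i < m" for i using Pm that by (simp add: is_measurement_def)
  have Pmc: "Pm i \<in> carrier_mat n n" if "i < m" for i using psd_carrier[OF Pmpsd[OF that]] .
  have "Re (mat_trace (\<psi> i * mat_adjoint (\<psi> i) * Pm i)) \<le> a * Re (mat_trace (S * Pm i))"
    if i: "i < m" for i
  proof -
    define G where "G = \<psi> i * mat_adjoint (\<psi> i)"
    have Gc: "G \<in> carrier_mat n n" using \<psi>[OF i] by (simp add: G_def)
    have "0 \<le> Re (mat_trace ((of_real a \<cdot>\<^sub>m S - G) * Pm i))"
      using mat_trace_mult_psd_nonneg[OF psd_scaled_minus_gram[OF S T TS \<psi>[OF i] compress[OF i] a]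
          Pmpsd[OF i]]
      by (simp add: G_def)
    also have "(of_real a \<cdot>\<^sub>m S - G) * Pm i = of_real a \<cdot>\<^sub>m (S * Pm i) - G * Pm i"
      using Sc Gc Pmc[OF i]
      by (simp add: minus_mult_distrib_mat[of _ n n] mult_smult_assoc_mat[of _ n n _ n])
    finally show ?thesis
      using Sc Gc Pmc[OF i] by (simp add: G_def mat_trace_minus[of _ n] mat_trace_smult[of _ n])
  qed
  then have "(\<Sum>i<m. Re (mat_trace (\<psi> i * mat_adjoint (\<psi> i) * Pm i)))
      \<le> (\<Sum>i<m. a * Re (mat_trace (S * Pm i)))"
    by (intro sum_mono) auto
  also have "\<dots> = a * Re (mat_trace (S * msum n Pm m))"
    using mat_trace_mult_msum[OF Sc Pmc] by (simp add: sum_distrib_left Re_sum)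
  also have "msum n Pm m = 1\<^sub>m n" using Pm by (simp add: is_measurement_def)
  finally show ?thesis using Sc by simp
qed

lemma lsm_detection_value:
  assumes S: "psd n S" and T: "T \<in> carrier_mat n n" and TS: "T * S = 1\<^sub>m n"
    and SS: "S * S = msum n (\<lambda>i. \<psi> i * mat_adjoint (\<psi> i)) m"
    and \<psi>: "\<And>i. i < m \<Longrightarrow> \<psi> i \<in> carrier_mat n (r i)"
    and compress: "\<And>i. i < m \<Longrightarrow> mat_adjoint (\<psi> i) * T * \<psi> i = of_real a \<cdot>\<^sub>m 1\<^sub>m (r i)"
  shows "(\<Sum>i<m. Re (mat_trace (\<psi> i * mat_adjoint (\<psi> i) * (T * \<psi> i * mat_adjoint (T * \<psi> i)))))
    = a * Re (mat_trace S)"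
proof -
  have Sc: "S \<in> carrier_mat n n" using psd_carrier[OF S] .
  have hT: "mat_adjoint T = T"
    using psd_inverse[OF S T TS] by (simp add: psd_def hermitian_def)
  have "S = T * msum n (\<lambda>i. \<psi> i * mat_adjoint (\<psi> i)) m"
    using assoc_mult_mat[OF T Sc Sc] TS Sc SS by simp
  moreover have "\<psi> i * mat_adjoint (\<psi> i) \<in> carrier_mat n n" if "i < m" for i
    using \<psi>[OF that] by simp
  ultimately have "mat_trace S = (\<Sum>i<m. mat_trace (T * (\<psi> i * mat_adjoint (\<psi> i))))"
    using mat_trace_mult_msum[OF T] by simp
  also have "\<dots> = (\<Sum>i<m. of_real a * of_nat (r i))"
    using mat_trace_mult_gram[OF T \<psi> compress] by simp
  finally have "a * Re (mat_trace S) = (\<Sum>i<m. a * a * real (r i))"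
    by (simp add: Re_sum sum_distrib_left mult_ac)
  also have "\<dots> = (\<Sum>i<m. Re (mat_trace (\<psi> i * mat_adjoint (\<psi> i) * (T * \<psi> i * mat_adjoint (T * \<psi> i)))))"
    using mat_trace_gram_mult_lsm[OF T hT \<psi> compress] by simp
  finally show ?thesis ..
qed

lemma gram_smult_sqrt:
  fixes \<phi> :: "complex mat"
  assumes \<phi>: "\<phi> \<in> carrier_mat n k" and p: "0 \<le> p"
  shows "(of_real (sqrt p) \<cdot>\<^sub>m \<phi>) * mat_adjoint (of_real (sqrt p) \<cdot>\<^sub>m \<phi>) = of_real p \<cdot>\<^sub>m (\<phi> * mat_adjoint \<phi>)"
proof -
  have \<phi>a: "mat_adjoint \<phi> \<in> carrier_mat k n" using \<phi> by simp
  have "(of_real (sqrt p) \<cdot>\<^sub>m \<phi>) * mat_adjoint (of_real (sqrt p) \<cdot>\<^sub>m \<phi>)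
      = of_real (sqrt p) \<cdot>\<^sub>m (of_real (sqrt p) \<cdot>\<^sub>m (\<phi> * mat_adjoint \<phi>))"
    using mult_smult_assoc_mat[OF \<phi> smult_carrier_mat[OF \<phi>a]] mult_smult_distrib[OF \<phi> \<phi>a]
    by (simp add: mat_adjoint_smult)
  also have "\<dots> = (of_real (sqrt p) * of_real (sqrt p)) \<cdot>\<^sub>m (\<phi> * mat_adjoint \<phi>)"
    by (rule eq_matI) auto
  also have "of_real (sqrt p) * of_real (sqrt p) = (of_real p :: complex)"
    using p by (simp flip: of_real_mult)
  finally show ?thesis .
qed

lemma is_measurement_carrier: "is_measurement n m Q \<Longrightarrow> i < m \<Longrightarrow> Q i \<in> carrier_mat n n"
  by (simp add: is_measurement_def psd_carrier)

lemma prob_detect_eq_sum_gram: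
  assumes \<phi>: "\<And>i. i < m \<Longrightarrow> \<phi> i \<in> carrier_mat n (r i)"
    and \<rho>: "\<And>i. i < m \<Longrightarrow> \<rho> i = \<phi> i * mat_adjoint (\<phi> i)"
    and p: "\<And>i. i < m \<Longrightarrow> 0 \<le> p i" and Q: "\<And>i. i < m \<Longrightarrow> Q i \<in> carrier_mat n n"
  shows "prob_detect m p \<rho> Q = (\<Sum>i<m. Re (mat_trace
    ((of_real (sqrt (p i)) \<cdot>\<^sub>m \<phi> i) * mat_adjoint (of_real (sqrt (p i)) \<cdot>\<^sub>m \<phi> i) * Q i)))"
  unfolding prob_detect_def
proof (rule sum.cong)
  fix i assume "i \<in> {..<m}"
  then have i: "i < m" by simp
  have \<rho>c: "\<rho> i \<in> carrier_mat n n"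
    using \<rho>[OF i] mult_carrier_mat[OF \<phi>[OF i] mat_adjoint_carrier[OF \<phi>[OF i]]] by simp
  have "(of_real (sqrt (p i)) \<cdot>\<^sub>m \<phi> i) * mat_adjoint (of_real (sqrt (p i)) \<cdot>\<^sub>m \<phi> i) * Q i
      = of_real (p i) \<cdot>\<^sub>m (\<rho> i * Q i)"
    using gram_smult_sqrt[OF \<phi>[OF i] p[OF i]] mult_smult_assoc_mat[OF \<rho>c Q[OF i]] \<rho>[OF i] by simp
  then show "p i * Re (mat_trace (\<rho> i * Q i)) = Re (mat_trace
      ((of_real (sqrt (p i)) \<cdot>\<^sub>m \<phi> i) * mat_adjoint (of_real (sqrt (p i)) \<cdot>\<^sub>m \<phi> i) * Q i))"
    using \<rho>c Q[OF i] by (simp add: mat_trace_smult[of _ n])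
qed simp

text \<open>If every \<open>r i\<close> vanishes, \<open>a = 0\<close> works, since all \<open>0 \<times> 0\<close> matrices coincide.\<close>

lemma uniform_compression_real_nonneg:
  assumes T: "psd n T" and \<psi>: "\<And>i. i < m \<Longrightarrow> \<psi> i \<in> carrier_mat n (r i)"
    and compress: "\<And>i. i < m \<Longrightarrow> mat_adjoint (\<psi> i) * T * \<psi> i = \<alpha> \<cdot>\<^sub>m 1\<^sub>m (r i)"
  obtains a where "0 \<le> a" and "\<And>i. i < m \<Longrightarrow> mat_adjoint (\<psi> i) * T * \<psi> i = of_real a \<cdot>\<^sub>m 1\<^sub>m (r i)"
proof (cases "\<exists>j<m. 0 < r j")
  case True
  then obtain j where j: "j < m" "0 < r j" by blast
  note real = scalar_compression_real_nonneg[OF T \<psi>[OF j(1)] j(2) compress[OF j(1)]]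
  show ?thesis using that[of "Re \<alpha>"] real compress by metis
next
  case False
  have "mat_adjoint (\<psi> i) * T * \<psi> i = of_real 0 \<cdot>\<^sub>m 1\<^sub>m (r i)" if "i < m" for i
    using False that \<psi>[OF that] psd_carrier[OF T] by (intro eq_matI) auto
  then show ?thesis using that[of 0] by simp
qed

theorem theorem1:
  fixes n m :: nat
    and \<rho> \<phi> :: "nat \<Rightarrow> complex mat"
    and r :: "nat \<Rightarrow> nat"
    and p :: "nat \<Rightarrow> real"
    and S T :: "complex mat"
    and \<alpha> :: complex
  defines "\<psi> \<equiv> (\<lambda>i. complex_of_real (sqrt (p i)) \<cdot>\<^sub>m \<phi> i)"
  defines "\<mu> \<equiv> (\<lambda>i. T * \<psi> i)"
  defines "\<Sigma> \<equiv> (\<lambda>i. \<mu> i * mat_adjoint (\<mu> i))"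
  assumes dens: "\<forall>i<m. density_op n (\<rho> i)"
    and span: "spans n (support_eigvecs m \<rho>)"
    and ppos: "\<forall>i<m. p i > 0"
    and psum: "(\<Sum>i<m. p i) = 1"
    and fact: "\<forall>i<m. \<phi> i \<in> carrier_mat n (r i) \<and> \<rho> i = \<phi> i * mat_adjoint (\<phi> i)"
    and S_sqrt: "psd n S" "S * S = msum n (\<lambda>i. \<psi> i * mat_adjoint (\<psi> i)) m"
    and T_inv: "T \<in> carrier_mat n n" "T * S = 1\<^sub>m n"
    and const: "\<forall>i<m. mat_adjoint (\<mu> i) * \<psi> i = \<alpha> \<cdot>\<^sub>m 1\<^sub>m (r i)"
  shows "is_measurement n m \<Sigma> \<and>
         (\<forall>Pm. is_measurement n m Pm \<longrightarrow> prob_detect m p \<rho> Pm \<le> prob_detect m p \<rho> \<Sigma>)"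
proof -
  have \<psi>: "\<psi> i \<in> carrier_mat n (r i)" if "i < m" for i using fact that by (simp add: \<psi>_def)
  have Tpsd: "psd n T" using psd_inverse[OF S_sqrt(1) T_inv] by simp
  have "mat_adjoint (\<psi> i) * T * \<psi> i = \<alpha> \<cdot>\<^sub>m 1\<^sub>m (r i)" if "i < m" for i
    using const[rule_format, OF that] mat_adjoint_mult[OF T_inv(1) \<psi>[OF that]] psd_hermitian[OF Tpsd]
    by (simp add: \<mu>_def hermitian_def)
  then obtain a where a: "0 \<le> a"
    and compress: "\<And>i. i < m \<Longrightarrow> mat_adjoint (\<psi> i) * T * \<psi> i = of_real a \<cdot>\<^sub>m 1\<^sub>m (r i)"
    using uniform_compression_real_nonneg[where \<psi> = \<psi> and r = r, OF Tpsd \<psi>] by blast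
  have detect: "prob_detect m p \<rho> Q = (\<Sum>i<m. Re (mat_trace (\<psi> i * mat_adjoint (\<psi> i) * Q i)))"
    if "is_measurement n m Q" for Q
    using prob_detect_eq_sum_gram[of m \<phi> n r \<rho> p Q] fact ppos is_measurement_carrier[OF that]
    by (simp add: \<psi>_def less_imp_le)
  have meas: "is_measurement n m \<Sigma>"
    using lsm_is_measurement[OF S_sqrt(1) T_inv S_sqrt(2) \<psi>] by (simp add: \<Sigma>_def \<mu>_def)
  moreover have "prob_detect m p \<rho> Pm \<le> prob_detect m p \<rho> \<Sigma>" if Pm: "is_measurement n m Pm" for Pm
    using lsm_detection_bound[where \<psi> = \<psi> and r = r, OF S_sqrt(1) T_inv \<psi> compress a Pm]
      lsm_detection_value[where \<psi> = \<psi> and r = r, OF S_sqrt(1) T_inv S_sqrt(2) \<psi> compress]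
      detect[OF Pm] detect[OF meas]
    by (simp add: \<Sigma>_def \<mu>_def)
  ultimately show ?thesis by blast
qed

end
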